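(* Let $F\ge1$ and let $n_1,\dots,n_F$ be positive integers with $n_1\ge2$. With $p_a,q_a,r,r^{(2)}$ as in the context, define $$A_F=\sum_{a=1}^{F-1}(-1)^{a+1}\frac{1}{p_aq_a}+(-1)^{F+1}\frac{1}{p_F r}.$$ Then $A_F=r^{(2)}/r$.
   Context: For $1\le k\le a\le F$, let $p^{(k)}_a/q^{(k)}_a$ (coprime positive integers) equal the continued fraction $[n_a,\dots,n_k]:=1/(n_a+1/(n_{a-1}+\cdots+1/n_k))$, $[n_k]=1/n_k$; write $p_a=p^{(1)}_a$, $q_a=q^{(1)}_a$. Set $r^{(k)}=p^{(k)}_F+q^{(k)}_F$ for $1\le k\le F$, $r^{(F+1)}=1$, and $r=r^{(1)}$ (so $r^{(2)}=1$ when $F=1$). *)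

theory Defs
  imports Complex_Main
begin

text \<open>The continued fraction [n_a, ..., n_k] = 1/(n_a + 1/(n_{a-1} + ... + 1/n_k)),
  with [n_k] = 1/n_k, as a rational number (for k \<le> a).\<close>
fun cfrac :: "(nat \<Rightarrow> nat) \<Rightarrow> nat \<Rightarrow> nat \<Rightarrow> rat" where
  "cfrac n k a = (if a \<le> k then 1 / of_nat (n k)
                  else 1 / (of_nat (n a) + cfrac n k (a - 1)))"

definition pk :: "(nat \<Rightarrow> nat) \<Rightarrow> nat \<Rightarrow> nat \<Rightarrow> int" where
  "pk n k a = fst (quotient_of (cfrac n k a))"

definition qk :: "(nat \<Rightarrow> nat) \<Rightarrow> nat \<Rightarrow> nat \<Rightarrow> int" where
  "qk n k a = snd (quotient_of (cfrac n k a))"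

definition rk :: "(nat \<Rightarrow> nat) \<Rightarrow> nat \<Rightarrow> nat \<Rightarrow> int" where
  "rk n F k = (if k = F + 1 then 1 else pk n k F + qk n k F)"

end

theory Submission
  imports Defs
begin

text \<open>With the continuant recurrence Q_{a+2} = n_{a+1} Q_{a+1} + Q_a from (Q_0, Q_1) = (0, 1) one
  has p_a = Q_a and q_a = Q_{a+1}; the same recurrence from (1, 0) gives a sequence H with
  p^{(2)}_a = H_a, q^{(2)}_a = H_{a+1}. The Casoratian H_{a+1} Q_a - H_a Q_{a+1} = (-1)^{a+1} makes
  the alternating sum of the 1/(Q_a Q_{a+1}) telescope to H_F/Q_F, and the last term of A_F is the
  step from H_F/Q_F to the mediant (H_F + H_{F+1})/(Q_F + Q_{F+1}) = r^{(2)}/r.\<close>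

lemma quotient_of_int_divide:
  assumes "0 < b" "coprime a b"
  shows "quotient_of (of_int a / of_int b) = (a, b)"
  using assms by (simp add: Fract_of_int_quotient [symmetric] quotient_of_Fract)

fun continuant :: "(nat \<Rightarrow> nat) \<Rightarrow> int \<Rightarrow> int \<Rightarrow> nat \<Rightarrow> int" where
  "continuant n x y 0 = x"
| "continuant n x y (Suc 0) = y"
| "continuant n x y (Suc (Suc a)) = int (n (Suc a)) * continuant n x y (Suc a) + continuant n x y a"

lemma continuant_casoratian:
  "continuant n x y (Suc a) * continuant n x' y' a - continuant n x y a * continuant n x' y' (Suc a)
     = (-1) ^ a * (y * x' - x * y')"
  by (induction a) (simp_all add: algebra_simps)

lemma continuant_cross_difference:
  "(of_int (continuant n 1 0 (Suc a)) * of_int (continuant n 0 1 a)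
     - of_int (continuant n 1 0 a) * of_int (continuant n 0 1 (Suc a)) :: 'a :: ring_1)
   = (-1) ^ (a + 1)"
  using arg_cong[OF continuant_casoratian[of n 1 0 a 0 1], of of_int] by simp

lemma coprime_continuant:
  assumes "coprime x y"
  shows "coprime (continuant n x y a) (continuant n x y (Suc a))"
proof (induction a)
  case 0 with assms show ?case by simp
next
  case (Suc a)
  then show ?case
    by (simp add: coprime_iff_gcd_eq_1 gcd_add_mult gcd.commute)
qed

lemma continuant_nonneg:
  assumes "0 \<le> x" "0 \<le> y"
  shows "0 \<le> continuant n x y a"
  using assms by (induction n x y a rule: continuant.induct) auto

lemma continuant_pos:
  assumes "0 \<le> x" "0 < y" "0 < n 1" "0 < a"
  shows "0 < continuant n x y a"
  using assms
proof (induction n x y a rule: continuant.induct)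
  case (3 n x y a)
  show ?case
  proof (cases a)
    case 0 with 3 show ?thesis by (simp add: add_pos_nonneg)
  next
    case (Suc b)
    with 3 continuant_nonneg[of x y n "Suc a"] show ?thesis
      by (simp add: add_nonneg_pos)
  qed
qed auto

lemma continuant_Suc_shift:
  "continuant n x y (Suc a) = continuant (\<lambda>i. n (Suc i)) y (int (n 1) * y + x) a"
  by (induction a rule: induct_nat_012) simp_all

declare cfrac.simps [simp del]

lemma cfrac_shift: "cfrac (\<lambda>i. n (Suc i)) k a = cfrac n (Suc k) (Suc a)"
  by (induction a) (simp_all add: cfrac.simps[of _ k] cfrac.simps[of _ "Suc k"])

lemma pk_shift: "pk (\<lambda>i. n (Suc i)) k a = pk n (Suc k) (Suc a)"
  and qk_shift: "qk (\<lambda>i. n (Suc i)) k a = qk n (Suc k) (Suc a)"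
  by (simp_all add: pk_def qk_def cfrac_shift)

lemma divide_add_cross_difference:
  fixes h h' q q' :: "'a :: field"
  assumes "q \<noteq> 0" "q' \<noteq> 0"
  shows "h / q + (h' * q - h * q') / (q * q') = h' / q'"
  using assms by (simp add: field_simps)

lemma cfrac_eq_continuant_ratio:
  assumes "0 < n 1" "0 < a"
  shows "cfrac n 1 a = of_int (continuant n 0 1 a) / of_int (continuant n 0 1 (Suc a))"
proof -
  from assms(2) have "1 \<le> a" by simp
  then show ?thesis
  proof (induction a rule: dec_induct)
    case base
    then show ?case by (simp add: cfrac.simps numeral_2_eq_2)
  next
    case (step a)
    have "0 < continuant n 0 1 a" "0 < continuant n 0 1 (Suc a)"
      using assms(1) step(1) by (auto intro: continuant_pos)
    moreover have "cfrac n 1 (Suc a) = 1 / (of_nat (n (Suc a)) + cfrac n 1 a)"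
      using step(1) by (simp add: cfrac.simps)
    ultimately show ?case
      unfolding step.IH by (simp add: field_simps add_nonneg_pos)
  qed
qed

lemma pk_qk_eq_continuant:
  assumes "0 < n 1" "0 < a"
  shows "pk n 1 a = continuant n 0 1 a" "qk n 1 a = continuant n 0 1 (Suc a)"
proof -
  have "quotient_of (cfrac n 1 a) = (continuant n 0 1 a, continuant n 0 1 (Suc a))"
    unfolding cfrac_eq_continuant_ratio[of n a, OF assms]
    using assms continuant_pos[of 0 1 n "Suc a"]
    by (simp add: quotient_of_int_divide coprime_continuant)
  then show "pk n 1 a = continuant n 0 1 a" "qk n 1 a = continuant n 0 1 (Suc a)"
    by (simp_all add: pk_def qk_def)
qed

lemma alternating_sum_continuant:
  assumes "0 < n 1"
  shows "(\<Sum>a=1..m. (-1) ^ (a + 1) / (of_int (continuant n 0 1 a) * of_int (continuant n 0 1 (Suc a))))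
       = (of_int (continuant n 1 0 (Suc m)) / of_int (continuant n 0 1 (Suc m)) :: 'a :: field_char_0)"
proof (induction m)
  case (Suc m)
  let ?Q = "\<lambda>a. of_int (continuant n 0 1 a) :: 'a"
  let ?H = "\<lambda>a. of_int (continuant n 1 0 a) :: 'a"
  have "0 < continuant n 0 1 (Suc m)" "0 < continuant n 0 1 (Suc (Suc m))"
    using assms by (auto intro: continuant_pos simp del: continuant.simps)
  then have pos: "?Q (Suc m) \<noteq> 0" "?Q (Suc (Suc m)) \<noteq> 0" by (simp_all del: continuant.simps)
  have "(\<Sum>a=1..Suc m. (-1) ^ (a + 1) / (?Q a * ?Q (Suc a)))
      = ?H (Suc m) / ?Q (Suc m) + (-1) ^ (Suc m + 1) / (?Q (Suc m) * ?Q (Suc (Suc m)))"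
    using Suc.IH by simp
  also have "\<dots> = ?H (Suc (Suc m)) / ?Q (Suc (Suc m))"
    using divide_add_cross_difference[OF pos, of "?H (Suc m)" "?H (Suc (Suc m))"]
    by (simp only: continuant_cross_difference)
  finally show ?case .
qed simp

lemma alternating_sum_pk_qk:
  assumes "0 < n 1"
  shows "(\<Sum>a=1..m. (-1) ^ (a + 1) * (1 / (of_int (pk n 1 a) * of_int (qk n 1 a))))
       = (of_int (continuant n 1 0 (Suc m)) / of_int (continuant n 0 1 (Suc m)) :: 'a :: field_char_0)"
proof -
  have "(-1) ^ (a + 1) * (1 / (of_int (pk n 1 a) * of_int (qk n 1 a)))
      = (-1) ^ (a + 1) / (of_int (continuant n 0 1 a) * of_int (continuant n 0 1 (Suc a)) :: 'a)"
    if "a \<in> {1..m}" for a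
  proof -
    from that have a: "0 < a" by simp
    show ?thesis unfolding pk_qk_eq_continuant[of n a, OF assms a] by simp
  qed
  then show ?thesis
    unfolding alternating_sum_continuant[of n, OF assms, symmetric] by (rule sum.cong [OF refl])
qed

lemma rk_1_eq_continuant:
  assumes "0 < n 1" "0 < F"
  shows "rk n F 1 = continuant n 0 1 F + continuant n 0 1 (Suc F)"
  using assms unfolding rk_def pk_qk_eq_continuant[of n F, OF assms] by simp

lemma rk_2_eq_continuant:
  assumes "\<forall>i\<in>{1..F}. 0 < n i" "0 < F"
  shows "rk n F 2 = continuant n 1 0 F + continuant n 1 0 (Suc F)"
proof (cases "F = 1")
  case False
  then obtain b where F: "F = Suc (Suc b)"
    using assms(2) by (metis One_nat_def Suc_pred not0_implies_Suc)
  let ?m = "\<lambda>i. n (Suc i)"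
  have "0 < ?m 1" using assms(1) F by auto
  then have "pk n 2 F = continuant ?m 0 1 (Suc b)" "qk n 2 F = continuant ?m 0 1 (Suc (Suc b))"
    using pk_qk_eq_continuant[of ?m "Suc b"] by (simp_all add: F numeral_2_eq_2 pk_shift qk_shift)
  moreover have "continuant n 1 0 (Suc a) = continuant ?m 0 1 a" for a
    using continuant_Suc_shift[of n 1 0 a] by simp
  ultimately show ?thesis
    by (simp only: rk_def F) simp
qed (simp add: rk_def numeral_2_eq_2)

theorem proposition7p7:
  fixes n :: "nat \<Rightarrow> nat" and F :: nat
  assumes "F \<ge> 1"
    and "\<forall>i\<in>{1..F}. n i > 0"
    and "n 1 \<ge> 2"
  shows "(\<Sum>a=1..F-1. (-1) ^ (a + 1) * (1 / (of_int (pk n 1 a) * of_int (qk n 1 a))))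
           + (-1) ^ (F + 1) * (1 / (of_int (pk n 1 F) * of_int (rk n F 1)))
         = (of_int (rk n F 2) / of_int (rk n F 1) :: real)"
proof -
  let ?Q = "\<lambda>a. real_of_int (continuant n 0 1 a)"
  let ?H = "\<lambda>a. real_of_int (continuant n 1 0 a)"
  have n1: "0 < n 1" and F: "0 < F" "Suc (F - 1) = F" using assms by auto
  have "0 < continuant n 0 1 F" "0 < continuant n 0 1 (Suc F)"
    using n1 F by (auto intro: continuant_pos)
  then have "?Q F \<noteq> 0" "?Q F + ?Q (Suc F) \<noteq> 0" by linarith+
  moreover have "(?H F + ?H (Suc F)) * ?Q F - ?H F * (?Q F + ?Q (Suc F)) = (-1) ^ (F + 1)"
    using continuant_cross_difference[of n F, where 'a = real] by (simp add: algebra_simps)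
  ultimately show ?thesis
    using divide_add_cross_difference[of "?Q F" "?Q F + ?Q (Suc F)" "?H F" "?H F + ?H (Suc F)"]
      alternating_sum_pk_qk[of n, OF n1, of "F - 1", where 'a = real]
    unfolding F rk_1_eq_continuant[of n, OF n1 F(1)] rk_2_eq_continuant[OF assms(2) F(1)]
      pk_qk_eq_continuant[of n, OF n1 F(1)] by simp
qed

end
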